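(* Assume the setting in the context, with $\epsilon \in (0,1)$, $\delta = \bigl(1 + \frac{k+3}{2\epsilon}\bigr)^{-1}$, $S_{\mathrm{init}} = \{e^*\}$ with $e^* \in \arg\max_{e \in \mathcal{G}} f(\{e\})$, $f(S_{\mathrm{init}})>0$, and $\alpha = f(S_{\mathrm{init}})\delta/n$. Consider any sequence of improvement steps starting from $S_0 = S_{\mathrm{init}}$ and an arbitrary total order $\prec_0$, where step $j$ picks a $k$-replacement $(A,B)$ for $S_j$ with $\sum_{a \in A} w_{(A,B)}(a)^2 > \sum_{b \in B} w(b)^2$ (weights computed for $S_j$ with respect to $\prec_j$), sets $S_{j+1} = (S_j \setminus B) \cup A$, and sets $\prec_{j+1}$ to be an order in which all elements of $S_j \setminus B$ precede all elements of $A$ and which agrees with $\prec_j$ within $S_j\setminus B$ and within $A$. Then the number of improvement steps is at most $n^3\delta^{-2} = n^3\bigl(1 + \frac{k+3}{2\epsilon}\bigr)^2$; in particular, for fixed $k$, it is $O(n^3\epsilon^{-2})$.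
   Context: Setting. $\mathcal{G}$ is a finite ground set with $|\mathcal{G}| = n$, $f : 2^{\mathcal{G}} \to \mathbb{R}_{\ge 0}$ is a nonnegative monotone submodular function, and $\mathcal{I} \subseteq 2^{\mathcal{G}}$ is a nonempty downward-closed family containing all singletons; $k\ge 1$ is an integer. Weights. For $S \in \mathcal{I}$ and a total order $\prec$, with $S = \{s_1 \prec \dots \prec s_m\}$ and $S_i = \{s_1,\dots,s_i\}$, define $w(s_i) = \lfloor (f(S_{i-1} \cup \{s_i\}) - f(S_{i-1}))/\alpha \rfloor \alpha$. A $k$-replacement for $S$ is a pair $(A,B)$ with $B \subseteq S$, $A \subseteq \mathcal{G} \setminus (S \setminus B)$, $|A| \le k$, $|B| \le k^2 - k + 1$, and $(S \setminus B) \cup A \in \mathcal{I}$. For such a pair, write $A = \{a_1 \prec \dots \prec a_r\}$, $A_i = \{a_1,\dots,a_i\}$, and define $w_{(A,B)}(a_i) = \lfloor (f((S\setminus B) \cup A_{i-1} \cup \{a_i\}) - f((S\setminus B)\cup A_{i-1}))/\alpha \rfloor \alpha$. *)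

theory Defs
  imports Main Complex_Main
begin

definition monotone_set_fun :: "'a set \<Rightarrow> ('a set \<Rightarrow> real) \<Rightarrow> bool" where
  "monotone_set_fun G f \<longleftrightarrow> (\<forall>X Y. X \<subseteq> Y \<and> Y \<subseteq> G \<longrightarrow> f X \<le> f Y)"

definition submodular :: "'a set \<Rightarrow> ('a set \<Rightarrow> real) \<Rightarrow> bool" where
  "submodular G f \<longleftrightarrow> (\<forall>X Y x. X \<subseteq> Y \<and> Y \<subseteq> G \<and> x \<in> G - Y \<longrightarrow>
      f (insert x Y) - f Y \<le> f (insert x X) - f X)"

definition down_closed :: "'a set set \<Rightarrow> bool" where
  "down_closed \<I> \<longleftrightarrow> (\<forall>X Y. Y \<in> \<I> \<and> X \<subseteq> Y \<longrightarrow> X \<in> \<I>)"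

definition pred_in :: "'a rel \<Rightarrow> 'a set \<Rightarrow> 'a \<Rightarrow> 'a set" where
  "pred_in r S s = {t \<in> S. (t, s) \<in> r \<and> t \<noteq> s}"

definition wt :: "('a set \<Rightarrow> real) \<Rightarrow> real \<Rightarrow> 'a rel \<Rightarrow> 'a set \<Rightarrow> 'a \<Rightarrow> real" where
  "wt f \<alpha> r S s = of_int \<lfloor>(f (insert s (pred_in r S s)) - f (pred_in r S s)) / \<alpha>\<rfloor> * \<alpha>"

definition wt_repl :: "('a set \<Rightarrow> real) \<Rightarrow> real \<Rightarrow> 'a rel \<Rightarrow> 'a set \<Rightarrow> 'a set \<Rightarrow> 'a set \<Rightarrow> 'a \<Rightarrow> real" where
  "wt_repl f \<alpha> r S A B a =
     of_int \<lfloor>(f (insert a ((S - B) \<union> pred_in r A a)) - f ((S - B) \<union> pred_in r A a)) / \<alpha>\<rfloor> * \<alpha>"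

definition k_replacement :: "'a set \<Rightarrow> 'a set set \<Rightarrow> nat \<Rightarrow> 'a set \<Rightarrow> 'a set \<Rightarrow> 'a set \<Rightarrow> bool" where
  "k_replacement G \<I> k S A B \<longleftrightarrow>
     B \<subseteq> S \<and> A \<subseteq> G - (S - B) \<and> card A \<le> k \<and> card B \<le> k^2 - k + 1 \<and> (S - B) \<union> A \<in> \<I>"

end

theory Submission
  imports Defs
begin

(* Measure a solution S with order r by the integer potential
     potential f alpha r S = sum over s in S of floor(gain of s over its r-predecessors / alpha)^2,
   so that the weights wt are exactly alpha times these integer levels.
   (1) Each improvement step raises the potential by at least 1: the new order puts the kept
       elements S - B first, so their predecessor sets can only shrink and, by submodularity,
       their levels can only grow; the added elements A get precisely the levels that define
       the weights wt_repl, and the improvement condition compares integers, so it is strict by 1.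
   (2) Every level is at most f {e*} / alpha = n / delta, because a marginal gain is at most
       the value of the singleton, so the potential of any solution is at most n (n/delta)^2.
   The file first develops marginal gains and levels, then the two order-theoretic facts about
   the new order, then the step lemma (1) and the bound (2); the theorem combines them by
   induction on the number of steps. *)

definition gain :: "('a set \<Rightarrow> real) \<Rightarrow> 'a set \<Rightarrow> 'a \<Rightarrow> real" where
  "gain f X s = f (insert s X) - f X"

definition level :: "('a set \<Rightarrow> real) \<Rightarrow> real \<Rightarrow> 'a rel \<Rightarrow> 'a set \<Rightarrow> 'a \<Rightarrow> int" where
  "level f \<alpha> r S s = \<lfloor>gain f (pred_in r S s) s / \<alpha>\<rfloor>"

definition potential :: "('a set \<Rightarrow> real) \<Rightarrow> real \<Rightarrow> 'a rel \<Rightarrow> 'a set \<Rightarrow> int" where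
  "potential f \<alpha> r S = (\<Sum>s\<in>S. (level f \<alpha> r S s)^2)"

lemma pred_in_subset: "pred_in r S s \<subseteq> S"
  and pred_in_notin: "s \<notin> pred_in r S s"
  by (auto simp: pred_in_def)

lemma gain_nonneg:
  assumes "monotone_set_fun G f" "X \<subseteq> G" "s \<in> G"
  shows "0 \<le> gain f X s"
  using assms unfolding monotone_set_fun_def gain_def by (simp add: subset_insertI)

lemma gain_antitone:
  assumes "submodular G f" "X \<subseteq> Y" "Y \<subseteq> G" "s \<in> G" "s \<notin> Y"
  shows "gain f Y s \<le> gain f X s"
  using assms unfolding submodular_def gain_def by auto

lemma sum_sq_wt:
  "(\<Sum>s\<in>X. (wt f \<alpha> r S s)^2) = \<alpha>^2 * of_int (\<Sum>s\<in>X. (level f \<alpha> r S s)^2)"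
  unfolding wt_def level_def gain_def
  by (simp add: sum_distrib_left algebra_simps)

lemma floor_sq_mono:
  fixes x y a :: real
  assumes "0 \<le> x" "x \<le> y" "0 < a"
  shows "\<lfloor>x / a\<rfloor>^2 \<le> \<lfloor>y / a\<rfloor>^2"
proof -
  have "\<lfloor>x / a\<rfloor> \<le> \<lfloor>y / a\<rfloor>"
    using assms by (intro floor_mono divide_right_mono) auto
  moreover have "0 \<le> \<lfloor>x / a\<rfloor>" using assms by simp
  ultimately show ?thesis by (simp add: power_mono)
qed

lemma pred_in_prefix:
  assumes "antisym r'" "\<forall>x\<in>R. \<forall>y\<in>A. (x, y) \<in> r'"
    and "\<forall>x\<in>R. \<forall>y\<in>R. (x, y) \<in> r' \<longleftrightarrow> (x, y) \<in> r" "x \<in> R"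
  shows "pred_in r' (R \<union> A) x = pred_in r R x"
proof -
  have "t \<notin> pred_in r' (R \<union> A) x" if "t \<in> A" for t
    using assms that by (auto simp: pred_in_def dest: antisymD)
  then show ?thesis using assms(3,4) unfolding pred_in_def by blast
qed

lemma pred_in_suffix:
  assumes "\<forall>x\<in>R. \<forall>y\<in>A. (x, y) \<in> r'"
    and "\<forall>x\<in>A. \<forall>y\<in>A. (x, y) \<in> r' \<longleftrightarrow> (x, y) \<in> r" "a \<in> A" "a \<notin> R"
  shows "pred_in r' (R \<union> A) a = R \<union> pred_in r A a"
  using assms unfolding pred_in_def by blast

lemma wt_repl_eq_wt:
  assumes "\<forall>x\<in>S - B. \<forall>y\<in>A. (x, y) \<in> r'"
    and "\<forall>x\<in>A. \<forall>y\<in>A. (x, y) \<in> r' \<longleftrightarrow> (x, y) \<in> r" "a \<in> A" "a \<notin> S - B"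
  shows "wt_repl f \<alpha> r S A B a = wt f \<alpha> r' ((S - B) \<union> A) a"
  unfolding wt_repl_def wt_def pred_in_suffix[OF assms] ..

text \<open>A kept element can only move up in level, since it loses predecessors.\<close>
lemma level_sq_kept:
  assumes mono: "monotone_set_fun G f" and sub: "submodular G f" and "0 < \<alpha>"
    and "S \<subseteq> G" and "antisym r'" and "\<forall>x\<in>S - B. \<forall>y\<in>A. (x, y) \<in> r'"
    and "\<forall>x\<in>S - B. \<forall>y\<in>S - B. (x, y) \<in> r' \<longleftrightarrow> (x, y) \<in> r" and x: "x \<in> S - B"
  shows "(level f \<alpha> r S x)^2 \<le> (level f \<alpha> r' ((S - B) \<union> A) x)^2"
proof -
  have new: "pred_in r' ((S - B) \<union> A) x = pred_in r (S - B) x"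
    by (rule pred_in_prefix[OF assms(5-8)])
  have xG: "x \<in> G" and predG: "pred_in r S x \<subseteq> G"
    using x \<open>S \<subseteq> G\<close> pred_in_subset[of r S x] by auto
  have fewer: "pred_in r (S - B) x \<subseteq> pred_in r S x" unfolding pred_in_def by auto
  have "gain f (pred_in r S x) x \<le> gain f (pred_in r (S - B) x) x"
    by (rule gain_antitone[OF sub fewer predG xG pred_in_notin])
  moreover have "0 \<le> gain f (pred_in r S x) x" by (rule gain_nonneg[OF mono predG xG])
  ultimately show ?thesis
    unfolding level_def new using \<open>0 < \<alpha>\<close> by (intro floor_sq_mono)
qed

lemma potential_step:
  assumes mono: "monotone_set_fun G f" and sub: "submodular G f" and "0 < \<alpha>" and "finite G"
    and "S \<subseteq> G" and "B \<subseteq> S" and "A \<subseteq> G - (S - B)"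
    and improve: "(\<Sum>a\<in>A. (wt_repl f \<alpha> r S A B a)^2) > (\<Sum>b\<in>B. (wt f \<alpha> r S b)^2)"
    and "antisym r'" and before: "\<forall>x\<in>S - B. \<forall>y\<in>A. (x, y) \<in> r'"
    and on_kept: "\<forall>x\<in>S - B. \<forall>y\<in>S - B. (x, y) \<in> r' \<longleftrightarrow> (x, y) \<in> r"
    and on_added: "\<forall>x\<in>A. \<forall>y\<in>A. (x, y) \<in> r' \<longleftrightarrow> (x, y) \<in> r"
  shows "potential f \<alpha> r S + 1 \<le> potential f \<alpha> r' ((S - B) \<union> A)"
proof -
  define T where "T = (S - B) \<union> A"
  have "A \<subseteq> G" using \<open>A \<subseteq> G - (S - B)\<close> by blast
  have fin: "finite S" "finite A" "finite B"
    using finite_subset[OF \<open>S \<subseteq> G\<close> \<open>finite G\<close>] finite_subset[OF \<open>A \<subseteq> G\<close> \<open>finite G\<close>]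
      finite_subset[OF \<open>B \<subseteq> S\<close>] by auto
  have same_wt: "wt_repl f \<alpha> r S A B a = wt f \<alpha> r' T a" if "a \<in> A" for a
  proof -
    have "a \<notin> S - B" using that \<open>A \<subseteq> G - (S - B)\<close> by blast
    then show ?thesis unfolding T_def by (rule wt_repl_eq_wt[OF before on_added that])
  qed
  have added: "(\<Sum>b\<in>B. (level f \<alpha> r S b)^2) < (\<Sum>a\<in>A. (level f \<alpha> r' T a)^2)"
  proof -
    have "\<alpha>^2 * of_int (\<Sum>b\<in>B. (level f \<alpha> r S b)^2)
        < \<alpha>^2 * of_int (\<Sum>a\<in>A. (level f \<alpha> r' T a)^2)"
      using improve by (simp add: same_wt sum_sq_wt)
    moreover have "0 < \<alpha>^2" using \<open>0 < \<alpha>\<close> by simp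
    ultimately show ?thesis by (simp only: mult_less_cancel_left_pos of_int_less_iff)
  qed
  have kept: "(\<Sum>x\<in>S - B. (level f \<alpha> r S x)^2) \<le> (\<Sum>x\<in>S - B. (level f \<alpha> r' T x)^2)"
    unfolding T_def
    by (rule sum_mono, rule level_sq_kept[OF mono sub \<open>0 < \<alpha>\<close> \<open>S \<subseteq> G\<close> \<open>antisym r'\<close> before on_kept])
  have "potential f \<alpha> r S
      = (\<Sum>x\<in>S - B. (level f \<alpha> r S x)^2) + (\<Sum>b\<in>B. (level f \<alpha> r S b)^2)"
    unfolding potential_def by (rule sum.subset_diff[OF \<open>B \<subseteq> S\<close> \<open>finite S\<close>])
  moreover have "potential f \<alpha> r' T
      = (\<Sum>x\<in>S - B. (level f \<alpha> r' T x)^2) + (\<Sum>a\<in>A. (level f \<alpha> r' T a)^2)"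
    unfolding potential_def T_def
    by (rule sum.union_disjoint) (use fin \<open>A \<subseteq> G - (S - B)\<close> in auto)
  ultimately show ?thesis using added kept unfolding T_def by linarith
qed

lemma potential_bound:
  assumes mono: "monotone_set_fun G f" and sub: "submodular G f" and "0 < \<alpha>"
    and "f {} \<ge> 0" and single: "\<forall>e\<in>G. f {e} \<le> F" and "S \<subseteq> G"
  shows "real_of_int (potential f \<alpha> r S) \<le> real (card S) * (F / \<alpha>)^2"
proof -
  have "real_of_int ((level f \<alpha> r S s)^2) \<le> (F / \<alpha>)^2" if s: "s \<in> S" for s
  proof -
    have sG: "s \<in> G" and predG: "pred_in r S s \<subseteq> G"
      using s \<open>S \<subseteq> G\<close> pred_in_subset[of r S s] by auto
    have "gain f (pred_in r S s) s \<le> gain f {} s"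
      by (rule gain_antitone[OF sub empty_subsetI predG sG pred_in_notin])
    also have "\<dots> \<le> F" using bspec[OF single sG] \<open>f {} \<ge> 0\<close> by (simp add: gain_def)
    finally have gain_le: "gain f (pred_in r S s) s \<le> F" .
    have "real_of_int (level f \<alpha> r S s) \<le> gain f (pred_in r S s) s / \<alpha>"
      unfolding level_def by (rule of_int_floor_le)
    also have "\<dots> \<le> F / \<alpha>" using gain_le \<open>0 < \<alpha>\<close> by (simp add: divide_right_mono)
    finally have "real_of_int (level f \<alpha> r S s) \<le> F / \<alpha>" .
    moreover have "0 \<le> level f \<alpha> r S s"
      unfolding level_def using gain_nonneg[OF mono predG sG] \<open>0 < \<alpha>\<close> by simp
    ultimately show ?thesis by (simp add: power_mono)
  qed
  then have "real_of_int (potential f \<alpha> r S) \<le> (\<Sum>s\<in>S. (F / \<alpha>)^2)"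
    unfolding potential_def of_int_sum by (rule sum_mono)
  then show ?thesis by simp
qed

theorem mainTheorem5:
  fixes G :: "'a set" and f :: "'a set \<Rightarrow> real" and \<I> :: "'a set set" and k n :: nat
    and \<epsilon> \<delta> \<alpha> :: real and estar :: 'a
    and S A B :: "nat \<Rightarrow> 'a set" and ord :: "nat \<Rightarrow> 'a rel" and m :: nat
  assumes finG: "finite G" and cardG: "card G = n"
    and f_nonneg: "\<forall>X. X \<subseteq> G \<longrightarrow> f X \<ge> 0"
    and f_mono: "monotone_set_fun G f" and f_sub: "submodular G f"
    and I_sub: "\<I> \<subseteq> Pow G" and I_ne: "\<I> \<noteq> {}" and I_down: "down_closed \<I>"
    and I_single: "\<forall>e\<in>G. {e} \<in> \<I>"
    and k_pos: "k \<ge> 1"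
    and eps: "0 < \<epsilon>" "\<epsilon> < 1"
    and delta_def: "\<delta> = 1 / (1 + (real k + 3) / (2 * \<epsilon>))"
    and estar_in: "estar \<in> G" and estar_max: "\<forall>e\<in>G. f {e} \<le> f {estar}"
    and f_init_pos: "f {estar} > 0"
    and alpha_def: "\<alpha> = f {estar} * \<delta> / real n"
    and S0: "S 0 = {estar}"
    and ord0: "linear_order_on G (ord 0)"
    and steps: "\<forall>j<m.
        k_replacement G \<I> k (S j) (A j) (B j)
      \<and> (\<Sum>a\<in>A j. (wt_repl f \<alpha> (ord j) (S j) (A j) (B j) a)^2)
          > (\<Sum>b\<in>B j. (wt f \<alpha> (ord j) (S j) b)^2)
      \<and> S (Suc j) = (S j - B j) \<union> A j
      \<and> linear_order_on G (ord (Suc j))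
      \<and> (\<forall>x\<in>S j - B j. \<forall>y\<in>A j. (x, y) \<in> ord (Suc j))
      \<and> (\<forall>x\<in>S j - B j. \<forall>y\<in>S j - B j. (x, y) \<in> ord (Suc j) \<longleftrightarrow> (x, y) \<in> ord j)
      \<and> (\<forall>x\<in>A j. \<forall>y\<in>A j. (x, y) \<in> ord (Suc j) \<longleftrightarrow> (x, y) \<in> ord j)"
  shows "real m \<le> real n ^ 3 / \<delta>^2"
proof -
  have "n > 0" using finG cardG estar_in card_gt_0_iff by blast
  have "\<delta> > 0" unfolding delta_def using eps by (simp add: add_pos_nonneg)
  have "\<alpha> > 0" unfolding alpha_def using \<open>n > 0\<close> \<open>\<delta> > 0\<close> f_init_pos by simp
  have reach: "S j \<subseteq> G \<and> int j \<le> potential f \<alpha> (ord j) (S j)" if "j \<le> m" for j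
    using that
  proof (induction j)
    case 0
    show ?case using S0 estar_in by (simp add: potential_def sum_nonneg)
  next
    case (Suc j)
    then have "j < m" and IH: "S j \<subseteq> G" "int j \<le> potential f \<alpha> (ord j) (S j)" by auto
    with steps have step: "k_replacement G \<I> k (S j) (A j) (B j)"
      "S (Suc j) = (S j - B j) \<union> A j" "antisym (ord (Suc j))"
      by (auto simp: linear_order_on_def partial_order_on_def)
    have "potential f \<alpha> (ord j) (S j) + 1 \<le> potential f \<alpha> (ord (Suc j)) (S (Suc j))"
      unfolding step(2) using \<open>j < m\<close> steps step(1,3) IH(1)
      by (intro potential_step[OF f_mono f_sub \<open>\<alpha> > 0\<close> finG]) (auto simp: k_replacement_def)
    then show ?case using IH step(1,2) by (auto simp: k_replacement_def)
  qed
  have ratio: "f {estar} / \<alpha> = real n / \<delta>"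
    unfolding alpha_def using \<open>n > 0\<close> \<open>\<delta> > 0\<close> f_init_pos by simp
  have "card (S m) \<le> n" using reach[of m] finG cardG card_mono by blast
  have "real m \<le> real_of_int (potential f \<alpha> (ord m) (S m))" using reach[of m] by simp
  also have "\<dots> \<le> real (card (S m)) * (f {estar} / \<alpha>)^2"
    using potential_bound[OF f_mono f_sub \<open>\<alpha> > 0\<close> _ estar_max] reach[of m] f_nonneg by simp
  also have "\<dots> \<le> real n * (f {estar} / \<alpha>)^2"
    using \<open>card (S m) \<le> n\<close> by (simp add: mult_right_mono)
  also have "\<dots> = real n ^ 3 / \<delta>^2"
    unfolding ratio by (simp add: power_divide power3_eq_cube power2_eq_square)
  finally show ?thesis .
qed

end
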